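(* Let $F$ be a Lorenz-like map as in the context with vertical contraction rate $\lambda<1$, let $\delta'$ be the inverse of a positive integer, and let $L_{|\delta}=P_|\,L_F\,P_|$. Let $\mu,\nu$ be Borel probability measures on $Q$ with absolutely continuous $x$-marginals $\mu_x,\nu_x$. Then for every $n\ge1$, $$\|L_{|\delta}^n\mu-L_{|\delta}^n\nu\|\le \lambda^n+\frac{2\delta'}{1-\lambda}+V(\mu_x,\nu_x).$$
   Context: Let $I=[0,1]$, $Q=I\times I$ with the sup metric (diameter 1); $m$ is Lebesgue measure. A Lorenz-like map is $F(x,y)=(T(x),G(x,y))$ with: (i) $T:I\to I$ onto, with $0=c_0<\dots<c_N=1$ such that on each $(c_i,c_{i+1})$ $T$ is continuous, increasing, $C^1$, $\inf|T'|>1$ (derivative possibly unbounded); (ii) $|G(x,y_1)-G(x,y_2)|\le\lambda|y_1-y_2|$ with $\lambda<1$; (iii) $G:Q\to(0,1)$ is $C^1$ on $P\times[0,1]$, $P=[0,1]\setminus\{c_i\}$, $\sup|\partial_xG|<\infty$, $|\partial_yG|>0$ there; (iv) $1/|T'|$ has bounded variation. $L_F\mu(A)=\mu(F^{-1}A)$; $\mu_x=(\pi_1)_*\mu$, $\pi_1(x,y)=x$. $\|\mu\|=\sup\{|\int g\,d\mu|:\mathrm{Lip}(g)\le1,\|g\|_\infty\le1\}$ and $W(\mu,\nu)=\|\mu-\nu\|$. Total variation distance: $V(\mu_x,\nu_x)=\sup_{\|g\|_\infty\le1}|\int g\,d\mu_x-\int g\,d\nu_x|$. Divide $[0,1]$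 in the $y$-direction into intervals $J_1,\dots,J_{1/\delta'}$ of length $\delta'$ and let $S_i=[0,1]\times J_i$ be the horizontal strips. The vertical averaging operator $P_|$ is defined by: for each $i$, the restriction of $P_|\mu$ to $S_i$ equals $(\pi_1)_*(\mu|_{S_i})\otimes u_{J_i}$, where $u_{J_i}$ is the uniform probability measure on $J_i$ (i.e. inside each strip the vertical distribution of mass is replaced by the uniform one, keeping the $x$-distribution). *)

theory Defs
  imports "HOL-Probability.Probability"
begin

definition unit_sq :: "(real \<times> real) set" where
  "unit_sq = {0..1} \<times> {0..1}"

definition dist_sup :: "real \<times> real \<Rightarrow> real \<times> real \<Rightarrow> real" where
  "dist_sup p q = max \<bar>fst p - fst q\<bar> \<bar>snd p - snd q\<bar>"

definition bounded_variation_on :: "(real \<Rightarrow> real) \<Rightarrow> real set \<Rightarrow> bool" where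
  "bounded_variation_on f S \<longleftrightarrow> (\<exists>B. \<forall>(k::nat) (t::nat \<Rightarrow> real).
      (\<forall>j\<le>k. t j \<in> S) \<and> (\<forall>j<k. t j < t (Suc j)) \<longrightarrow>
      (\<Sum>j<k. \<bar>f (t (Suc j)) - f (t j)\<bar>) \<le> B)"

definition lorenz_like ::
  "(real \<Rightarrow> real) \<Rightarrow> (real \<times> real \<Rightarrow> real) \<Rightarrow> real \<Rightarrow> bool" where
  "lorenz_like T G lam \<longleftrightarrow>
    (\<exists>(N::nat) (c::nat \<Rightarrow> real) (T'::real \<Rightarrow> real) (Gx::real \<times> real \<Rightarrow> real) (Gy::real \<times> real \<Rightarrow> real).
      let P = {0..1} - c ` {0..N} in
      N \<ge> 1 \<and> c 0 = 0 \<and> c N = 1 \<and> (\<forall>i<N. c i < c (Suc i)) \<and>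
      \<comment> \<open>(i)\<close>
      T ` {0..1} = {0..1} \<and>
      (\<forall>i<N. continuous_on {c i<..<c (Suc i)} T
            \<and> strict_mono_on {c i<..<c (Suc i)} T
            \<and> (\<forall>x\<in>{c i<..<c (Suc i)}. (T has_real_derivative T' x) (at x))
            \<and> continuous_on {c i<..<c (Suc i)} T') \<and>
      (\<exists>\<rho>>1. \<forall>x\<in>P. \<rho> \<le> \<bar>T' x\<bar>) \<and>
      \<comment> \<open>(ii)\<close>
      (\<forall>x\<in>{0..1}. \<forall>y1\<in>{0..1}. \<forall>y2\<in>{0..1}. \<bar>G (x, y1) - G (x, y2)\<bar> \<le> lam * \<bar>y1 - y2\<bar>) \<and>
      \<comment> \<open>(iii)\<close>
      (\<forall>p\<in>unit_sq. 0 < G p \<and> G p < 1) \<and>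
      (\<forall>p\<in>P \<times> {0..1}. (G has_derivative (\<lambda>(h, k). Gx p * h + Gy p * k)) (at p within P \<times> {0..1})) \<and>
      continuous_on (P \<times> {0..1}) Gx \<and> continuous_on (P \<times> {0..1}) Gy \<and>
      bounded (Gx ` (P \<times> {0..1})) \<and>
      (\<forall>p\<in>P \<times> {0..1}. Gy p \<noteq> 0) \<and>
      \<comment> \<open>(iv)\<close>
      bounded_variation_on (\<lambda>x. 1 / \<bar>T' x\<bar>) P)"

text \<open>The map F, extended by the identity outside Q (all measures considered live on Q).\<close>
definition lorenz_map :: "(real \<Rightarrow> real) \<Rightarrow> (real \<times> real \<Rightarrow> real) \<Rightarrow> real \<times> real \<Rightarrow> real \<times> real" where
  "lorenz_map T G p = (if p \<in> unit_sq then (T (fst p), G p) else p)"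

definition transfer :: "(real \<Rightarrow> real) \<Rightarrow> (real \<times> real \<Rightarrow> real) \<Rightarrow>
    (real \<times> real) measure \<Rightarrow> (real \<times> real) measure" where
  "transfer T G M = distr M borel (lorenz_map T G)"

text \<open>With K = 1/delta', the intervals J_0, ..., J_{K-1} partition [0,1]:
  J_i = [i/K, (i+1)/K) for i < K-1 and J_{K-1} = [(K-1)/K, 1].\<close>
definition strip_int :: "nat \<Rightarrow> nat \<Rightarrow> real set" where
  "strip_int K i = (if Suc i = K then {real i / real K .. 1}
                    else {real i / real K ..< real (Suc i) / real K})"

definition strip :: "nat \<Rightarrow> nat \<Rightarrow> (real \<times> real) set" where
  "strip K i = {0..1} \<times> strip_int K i"

definition strip_part :: "nat \<Rightarrow> (real \<times> real) measure \<Rightarrow> nat \<Rightarrow> (real \<times> real) measure" where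
  "strip_part K M i =
     distr (density M (indicator (strip K i))) lborel fst
       \<Otimes>\<^sub>M uniform_measure lborel (strip_int K i)"

definition vert_avg :: "nat \<Rightarrow> (real \<times> real) measure \<Rightarrow> (real \<times> real) measure" where
  "vert_avg K M = measure_of UNIV (sets borel) (\<lambda>A. \<Sum>i<K. emeasure (strip_part K M i) A)"

definition L_delta :: "nat \<Rightarrow> (real \<Rightarrow> real) \<Rightarrow> (real \<times> real \<Rightarrow> real) \<Rightarrow>
    (real \<times> real) measure \<Rightarrow> (real \<times> real) measure" where
  "L_delta K T G M = vert_avg K (transfer T G (vert_avg K M))"

definition W_dist :: "(real \<times> real) measure \<Rightarrow> (real \<times> real) measure \<Rightarrow> real" where
  "W_dist M N = (SUP g \<in> {g :: real \<times> real \<Rightarrow> real.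
        (\<forall>p\<in>unit_sq. \<forall>q\<in>unit_sq. \<bar>g p - g q\<bar> \<le> dist_sup p q) \<and> (\<forall>p\<in>unit_sq. \<bar>g p\<bar> \<le> 1)}.
      \<bar>(\<integral>p. indicator unit_sq p * g p \<partial>M) - (\<integral>p. indicator unit_sq p * g p \<partial>N)\<bar>)"

definition V_dist :: "real measure \<Rightarrow> real measure \<Rightarrow> real" where
  "V_dist M N = (SUP g \<in> {g :: real \<Rightarrow> real. g \<in> borel_measurable borel \<and> (\<forall>x. \<bar>g x\<bar> \<le> 1)}.
      \<bar>(\<integral>x. g x \<partial>M) - (\<integral>x. g x \<partial>N)\<bar>)"

definition x_marginal :: "(real \<times> real) measure \<Rightarrow> real measure" where
  "x_marginal M = distr M lborel fst"

definition prob_on_Q :: "(real \<times> real) measure \<Rightarrow> bool" where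
  "prob_on_Q M \<longleftrightarrow> prob_space M \<and> sets M = sets borel \<and> emeasure M unit_sq = 1"

end

theory Submission
  imports Defs
begin

text \<open>
  By duality, \<open>\<integral> g d(L\<^sup>n \<mu>)\<close> is the integral against \<open>\<mu>\<close> of the \<open>n\<close>-th power of the adjoint
  operator applied to \<open>g\<close>; the adjoint of \<open>P_|\<close> replaces a function on each strip by its vertical
  average, and the adjoint of \<open>L_F\<close> is composition with \<open>F\<close>.  Call \<open>f\<close> \<open>(c, d)\<close>-regular if
  \<open>\<bar>f (x, y) - f (x, y')\<bar> \<le> c \<bar>y - y'\<bar> + d\<close> on \<open>Q\<close>.  Composition with \<open>F\<close> turns \<open>c\<close> into
  \<open>\<lambda> c\<close> because \<open>G\<close> contracts vertically, and averaging over strips of height \<open>\<delta>'\<close> adds \<open>2 c \<delta>'\<close>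
  to \<open>d\<close>.  Since averaging is a projection, the \<open>n\<close>-th adjoint power of a test function is
  \<open>(\<lambda>\<^sup>n, 2 \<delta>' \<Sum>\<^sub>k\<^sub>\<le>\<^sub>n \<lambda>\<^sup>k)\<close>-regular and constant in \<open>y\<close> on each strip, so it lies within
  \<open>(c + d) / 2\<close> of a function of \<open>x\<close> alone, whose integrals against \<open>\<mu>\<close> and \<open>\<nu>\<close> differ by at most
  \<open>V(\<mu>\<^sub>x, \<nu>\<^sub>x)\<close>.
\<close>

lemma nn_integral_sum_measure:
  assumes fin: "finite I" and sN: "sets N = sets M"
    and sNi: "\<And>i. i \<in> I \<Longrightarrow> sets (Ni i) = sets M"
    and e: "\<And>A. A \<in> sets M \<Longrightarrow> emeasure N A = (\<Sum>i\<in>I. emeasure (Ni i) A)"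
    and f: "f \<in> borel_measurable M"
  shows "(\<integral>\<^sup>+x. f x \<partial>N) = (\<Sum>i\<in>I. \<integral>\<^sup>+x. f x \<partial>Ni i)"
proof -
  have mN: "\<And>h::_\<Rightarrow>ennreal. h \<in> borel_measurable M \<Longrightarrow> h \<in> borel_measurable N"
    by (subst measurable_cong_sets[OF sN refl]) simp
  have mNi: "\<And>(h::_\<Rightarrow>ennreal) i. i \<in> I \<Longrightarrow> h \<in> borel_measurable M \<Longrightarrow> h \<in> borel_measurable (Ni i)"
    by (subst measurable_cong_sets[OF sNi refl]) simp_all
  show ?thesis using f
  proof (induct rule: borel_measurable_induct)
    case (cong u v)
    have sp: "space N = space M" "\<And>i. i \<in> I \<Longrightarrow> space (Ni i) = space M"
      using sN sNi by (metis sets_eq_imp_space_eq)+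
    have eq: "integral\<^sup>N L v = integral\<^sup>N L u" if "space L = space M" for L
      using cong(3) that by (intro nn_integral_cong) simp
    have "(\<Sum>i\<in>I. integral\<^sup>N (Ni i) v) = (\<Sum>i\<in>I. integral\<^sup>N (Ni i) u)"
      using eq sp(2) by (intro sum.cong refl) blast
    then show ?case using cong(4) eq[OF sp(1)] by simp
  next
    case (set A)
    have "A \<in> sets N" "\<And>i. i \<in> I \<Longrightarrow> A \<in> sets (Ni i)" using set sN sNi by auto
    then show ?case using set e by (simp add: nn_integral_indicator)
  next
    case (mult u c)
    have "integral\<^sup>N N (\<lambda>x. c * u x) = c * integral\<^sup>N N u"
      using mN[OF mult(2)] by (rule nn_integral_cmult)
    also have "\<dots> = (\<Sum>i\<in>I. c * integral\<^sup>N (Ni i) u)"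
      using mult(4) by (simp only: sum_distrib_left)
    also have "\<dots> = (\<Sum>i\<in>I. integral\<^sup>N (Ni i) (\<lambda>x. c * u x))"
      by (intro sum.cong refl nn_integral_cmult[symmetric] mNi mult(2))
    finally show ?case .
  next
    case (add u v)
    have "integral\<^sup>N N (\<lambda>x. v x + u x) = integral\<^sup>N N v + integral\<^sup>N N u"
      using mN[OF add(4)] mN[OF add(1)] by (rule nn_integral_add)
    also have "\<dots> = (\<Sum>i\<in>I. integral\<^sup>N (Ni i) v + integral\<^sup>N (Ni i) u)"
      using add(3) add(7) by (simp only: sum.distrib)
    also have "\<dots> = (\<Sum>i\<in>I. integral\<^sup>N (Ni i) (\<lambda>x. v x + u x))"
      by (intro sum.cong refl nn_integral_add[symmetric] mNi add(1) add(4))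
    finally show ?case .
  next
    case (seq U)
    have inc: "\<And>i. incseq (\<lambda>j. integral\<^sup>N (Ni i) (U j))"
      using seq(4) unfolding incseq_def le_fun_def by (blast intro: nn_integral_mono)
    have "(\<integral>\<^sup>+x. (SUP j. U j x) \<partial>N) = (SUP j. integral\<^sup>N N (U j))"
      using mN seq(1) by (intro nn_integral_monotone_convergence_SUP[OF seq(4)]) blast
    also have "\<dots> = (\<Sum>i\<in>I. SUP j. integral\<^sup>N (Ni i) (U j))"
      using seq(3) by (simp only: ennreal_SUP_sum[OF inc])
    also have "\<dots> = (\<Sum>i\<in>I. \<integral>\<^sup>+x. (SUP j. U j x) \<partial>Ni i)"
      by (intro sum.cong refl nn_integral_monotone_convergence_SUP[OF seq(4), symmetric] mNi seq(1))
    finally show ?case by (simp only: SUP_apply)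
  qed
qed

lemma strip_int_borel: "strip_int K i \<in> sets borel"
  unfolding strip_int_def by auto

lemma strip_borel: "strip K i \<in> sets borel"
proof -
  have "{0..1::real} \<times> strip_int K i \<in> sets (borel \<Otimes>\<^sub>M borel)"
    using strip_int_borel by (intro pair_measureI) auto
  then show ?thesis unfolding strip_def borel_prod .
qed

lemma strip_int_bounds:
  assumes "i < K" and "y \<in> strip_int K i"
  shows "real i / real K \<le> y" and "y \<le> real (Suc i) / real K"
proof -
  have "Suc i = K \<Longrightarrow> real (Suc i) / real K = 1" using assms(1) by simp
  then show "real i / real K \<le> y" "y \<le> real (Suc i) / real K"
    using assms(2) unfolding strip_int_def by (auto split: if_splits)
qed

lemma strip_int_subset: "i < K \<Longrightarrow> strip_int K i \<subseteq> {0..1}"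
proof
  fix y assume i: "i < K" and y: "y \<in> strip_int K i"
  have "real (Suc i) / real K \<le> 1" using i by (simp add: field_simps)
  moreover have "0 \<le> real i / real K" by simp
  ultimately show "y \<in> {0..1}" unfolding atLeastAtMost_iff
    using strip_int_bounds[OF i y] by (intro conjI; linarith)
qed

lemma strip_int_lower_mem: "i < K \<Longrightarrow> real i / real K \<in> strip_int K i"
proof -
  assume i: "i < K"
  have "real i / real K \<le> 1" using i by (simp add: field_simps)
  moreover have "real i / real K < real (Suc i) / real K" using i by (simp add: divide_strict_right_mono)
  ultimately show ?thesis unfolding strip_int_def by auto
qed

lemma strip_int_dist_le:
  assumes "i < K" and "y \<in> strip_int K i" and "t \<in> strip_int K i"
  shows "\<bar>y - t\<bar> \<le> 1 / real K"
proof -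
  have "real (Suc i) / real K - real i / real K = 1 / real K"
    by (simp add: add_divide_distrib)
  then show ?thesis using strip_int_bounds[OF assms(1,2)] strip_int_bounds[OF assms(1,3)] by linarith
qed

lemma strip_int_cover:
  assumes K: "K > 0" and y: "y \<in> {0..1::real}"
  obtains i where "i < K" and "y \<in> strip_int K i"
proof (cases "y = 1")
  case True
  then show ?thesis using K that[of "K - 1"] by (auto simp: strip_int_def of_nat_diff)
next
  case False
  define i where "i = nat \<lfloor>y * real K\<rfloor>"
  have y1: "0 \<le> y" "y < 1" using y False by auto
  have fl: "real i \<le> y * real K" "y * real K < real i + 1"
    using y1 unfolding i_def by (auto simp: of_nat_nat floor_le_iff)
  have "y * real K < real K" using y1 K by simp
  then have "i < K" using fl by linarith
  moreover have "real i / real K \<le> y" "y < real (Suc i) / real K" using fl K by (simp_all add: field_simps)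
  ultimately show ?thesis using that y1 by (auto simp: strip_int_def)
qed

lemma strip_int_disjoint:
  assumes "i < K" "j < K" "i \<noteq> j"
  shows "strip_int K i \<inter> strip_int K j = {}"
proof -
  have *: "strip_int K i \<inter> strip_int K j = {}" if ij: "i < j" "j < K" for i j
  proof -
    have "strip_int K i = {real i / real K ..< real (Suc i) / real K}"
      using ij by (simp add: strip_int_def)
    moreover have "strip_int K j \<subseteq> {real j / real K ..}" by (auto simp: strip_int_def)
    moreover have "real (Suc i) / real K \<le> real j / real K" using ij by (simp add: divide_right_mono)
    ultimately show ?thesis by auto
  qed
  show ?thesis using *[of i j] *[of j i] assms by (cases "i < j") auto
qed

lemma strip_disjoint: "i < K \<Longrightarrow> j < K \<Longrightarrow> i \<noteq> j \<Longrightarrow> strip K i \<inter> strip K j = {}"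
  using strip_int_disjoint[of i K j] unfolding strip_def by auto

lemma emeasure_strip_int: "i < K \<Longrightarrow> emeasure lborel (strip_int K i) = ennreal (1 / real K)"
proof -
  assume i: "i < K"
  have "real i / real K \<le> real (Suc i) / real K" by (simp add: divide_right_mono)
  moreover have "real (Suc i) / real K - real i / real K = 1 / real K"
    by (simp add: add_divide_distrib)
  moreover have "Suc i = K \<Longrightarrow> real (Suc i) / real K = 1" using i by simp
  ultimately show ?thesis unfolding strip_int_def by (auto simp del: of_nat_Suc)
qed

lemma prob_space_uniform_strip: "i < K \<Longrightarrow> prob_space (uniform_measure lborel (strip_int K i))"
  by (rule prob_space_uniform_measure) (auto simp: emeasure_strip_int)

lemma measure_uniform_strip_UNIV: "i < K \<Longrightarrow> measure (uniform_measure lborel (strip_int K i)) UNIV = 1"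
  using prob_space.prob_space[OF prob_space_uniform_strip] by simp

lemma AE_uniform_strip: "i < K \<Longrightarrow> AE t in uniform_measure lborel (strip_int K i). t \<in> strip_int K i"
  by (subst AE_uniform_measure) (auto simp: emeasure_strip_int)

section \<open>The vertical averaging operator on measures\<close>

lemma sets_strip_part: "sets (strip_part K M i) = sets borel"
proof -
  have "sets (strip_part K M i) = sets (borel \<Otimes>\<^sub>M (borel :: real measure))"
    unfolding strip_part_def by (rule sets_pair_measure_cong) simp_all
  then show ?thesis by (simp only: borel_prod)
qed

lemma sets_vert_avg: "sets (vert_avg K M) = sets borel"
proof -
  have "sigma_sets UNIV (sets (borel :: (real \<times> real) measure)) = sets borel"
    using sets.sigma_sets_eq[of "borel :: (real \<times> real) measure"] by simp
  then show ?thesis unfolding vert_avg_def by (subst sets_measure_of) auto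
qed

lemma emeasure_vert_avg:
  assumes A: "A \<in> sets borel"
  shows "emeasure (vert_avg K M) A = (\<Sum>i<K. emeasure (strip_part K M i) A)"
  unfolding vert_avg_def
proof (rule emeasure_measure_of_sigma)
  show "sigma_algebra UNIV (sets (borel :: (real \<times> real) measure))"
    using sets.sigma_algebra_axioms[of "borel :: (real \<times> real) measure"] by simp
  show "positive (sets borel) (\<lambda>A. \<Sum>i<K. emeasure (strip_part K M i) A)"
    unfolding positive_def by simp
  show "countably_additive (sets borel) (\<lambda>A. \<Sum>i<K. emeasure (strip_part K M i) A)"
  proof (rule countably_additiveI)
    fix B :: "nat \<Rightarrow> (real \<times> real) set"
    assume B: "range B \<subseteq> sets borel" "disjoint_family B"
    have "(\<Sum>n. \<Sum>i<K. emeasure (strip_part K M i) (B n)) = (\<Sum>i<K. \<Sum>n. emeasure (strip_part K M i) (B n))"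
      by (rule suminf_sum) (rule summableI)
    also have "\<dots> = (\<Sum>i<K. emeasure (strip_part K M i) (\<Union> (range B)))"
    proof (rule sum.cong[OF refl])
      fix i
      have "range B \<subseteq> sets (strip_part K M i)" using B(1) sets_strip_part by metis
      then show "(\<Sum>n. emeasure (strip_part K M i) (B n)) = emeasure (strip_part K M i) (\<Union> (range B))"
        using B(2) by (rule suminf_emeasure)
    qed
    finally show "(\<Sum>n. \<Sum>i<K. emeasure (strip_part K M i) (B n)) =
        (\<Sum>i<K. emeasure (strip_part K M i) (\<Union>n. B n))" .
  qed
qed (rule A)

lemma measurable_fst_borel: "fst \<in> measurable (borel :: (real \<times> real) measure) (borel :: real measure)"
  using measurable_fst[of "borel :: real measure" "borel :: real measure"] by (simp only: borel_prod)

lemma measurable_pair_uniform_measure: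
  fixes f :: "real \<times> real \<Rightarrow> 'b::topological_space"
  assumes f: "f \<in> borel_measurable borel" and N: "sets N = sets borel"
  shows "f \<in> borel_measurable (N \<Otimes>\<^sub>M uniform_measure lborel S)"
proof -
  have "sets (N \<Otimes>\<^sub>M uniform_measure lborel S) = sets (borel \<Otimes>\<^sub>M (borel :: real measure))"
    by (rule sets_pair_measure_cong) (simp_all add: N)
  then have "sets (N \<Otimes>\<^sub>M uniform_measure lborel S) = sets borel" by (simp only: borel_prod)
  then show ?thesis using f by (subst measurable_cong_sets) auto
qed

lemma borel_measurable_nn_integral_uniform_strip:
  fixes f :: "real \<times> real \<Rightarrow> ennreal"
  assumes i: "i < K" and f: "f \<in> borel_measurable borel"
  shows "(\<lambda>x. \<integral>\<^sup>+ t. f (x, t) \<partial>uniform_measure lborel (strip_int K i)) \<in> borel_measurable borel"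
proof -
  interpret U: prob_space "uniform_measure lborel (strip_int K i)" by (rule prob_space_uniform_strip[OF i])
  show ?thesis
    using measurable_pair_uniform_measure[OF f, of borel] by (intro U.borel_measurable_nn_integral) simp_all
qed

lemma nn_integral_strip_part:
  fixes f :: "real \<times> real \<Rightarrow> ennreal"
  assumes M: "sets M = sets borel" and i: "i < K" and f: "f \<in> borel_measurable borel"
  shows "integral\<^sup>N (strip_part K M i) f =
    (\<integral>\<^sup>+ p. indicator (strip K i) p * (\<integral>\<^sup>+ t. f (fst p, t) \<partial>uniform_measure lborel (strip_int K i)) \<partial>M)"
proof -
  define U where "U = uniform_measure lborel (strip_int K i)"
  define Dn where "Dn = density M (indicator (strip K i))"
  define D where "D = distr Dn lborel fst"
  define g where "g = (\<lambda>x. \<integral>\<^sup>+ t. f (x, t) \<partial>U)"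
  interpret U: prob_space U unfolding U_def by (rule prob_space_uniform_strip[OF i])
  have sDn: "sets Dn = sets borel" unfolding Dn_def using M by simp
  have mfst: "fst \<in> measurable Dn lborel"
    using measurable_fst_borel by (subst measurable_cong_sets[OF sDn]) simp_all
  have fD: "f \<in> borel_measurable (D \<Otimes>\<^sub>M U)"
    unfolding U_def D_def by (rule measurable_pair_uniform_measure[OF f]) simp
  have g: "g \<in> borel_measurable borel"
    unfolding g_def U_def by (rule borel_measurable_nn_integral_uniform_strip[OF i f])
  have gM: "(\<lambda>p. g (fst p)) \<in> borel_measurable M"
  proof -
    have "(\<lambda>p::real\<times>real. g (fst p)) \<in> borel_measurable borel"
      using measurable_compose[OF measurable_fst_borel g] by (simp add: o_def)
    then show ?thesis by (subst measurable_cong_sets[OF M]) simp_all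
  qed
  have iM: "indicator (strip K i) \<in> borel_measurable M"
    using strip_borel M by (intro borel_measurable_indicator) simp
  have "integral\<^sup>N (strip_part K M i) f = integral\<^sup>N (D \<Otimes>\<^sub>M U) f"
    unfolding strip_part_def D_def Dn_def U_def ..
  also have "\<dots> = (\<integral>\<^sup>+ x. g x \<partial>D)"
    unfolding g_def by (rule U.nn_integral_fst[OF fD, symmetric])
  also have "\<dots> = (\<integral>\<^sup>+ p. g (fst p) \<partial>Dn)"
    unfolding D_def by (rule nn_integral_distr[OF mfst]) (simp add: g)
  also have "\<dots> = (\<integral>\<^sup>+ p. indicator (strip K i) p * g (fst p) \<partial>M)"
    unfolding Dn_def by (rule nn_integral_density[OF iM gM])
  finally show ?thesis unfolding g_def U_def .
qed

lemma nn_integral_vert_avg: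
  fixes f :: "real \<times> real \<Rightarrow> ennreal"
  assumes M: "sets M = sets borel" and f: "f \<in> borel_measurable borel"
  shows "integral\<^sup>N (vert_avg K M) f =
    (\<integral>\<^sup>+ p. (\<Sum>i<K. indicator (strip K i) p * (\<integral>\<^sup>+ t. f (fst p, t) \<partial>uniform_measure lborel (strip_int K i))) \<partial>M)"
proof -
  have "integral\<^sup>N (vert_avg K M) f = (\<Sum>i<K. integral\<^sup>N (strip_part K M i) f)"
    by (rule nn_integral_sum_measure[OF _ sets_vert_avg sets_strip_part emeasure_vert_avg f]) simp
  also have "\<dots> = (\<Sum>i<K. \<integral>\<^sup>+ p. indicator (strip K i) p *
      (\<integral>\<^sup>+ t. f (fst p, t) \<partial>uniform_measure lborel (strip_int K i)) \<partial>M)"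
    by (intro sum.cong refl nn_integral_strip_part[OF M _ f]) simp
  also have "\<dots> = (\<integral>\<^sup>+ p. (\<Sum>i<K. indicator (strip K i) p *
      (\<integral>\<^sup>+ t. f (fst p, t) \<partial>uniform_measure lborel (strip_int K i))) \<partial>M)"
  proof (rule nn_integral_sum[symmetric])
    fix i assume "i \<in> {..<K}"
    then have "(\<lambda>p::real\<times>real. \<integral>\<^sup>+ t. f (fst p, t) \<partial>uniform_measure lborel (strip_int K i)) \<in> borel_measurable borel"
      using measurable_compose[OF measurable_fst_borel borel_measurable_nn_integral_uniform_strip[OF _ f]]
      by (simp add: o_def)
    moreover have "indicator (strip K i) \<in> (borel_measurable borel :: (real \<times> real \<Rightarrow> ennreal) set)"
      using strip_borel by (intro borel_measurable_indicator) simp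
    ultimately have "(\<lambda>p. indicator (strip K i) p *
        (\<integral>\<^sup>+ t. f (fst p, t) \<partial>uniform_measure lborel (strip_int K i))) \<in> borel_measurable borel"
      by (rule borel_measurable_times_ennreal[rotated])
    then show "(\<lambda>p. indicator (strip K i) p *
        (\<integral>\<^sup>+ t. f (fst p, t) \<partial>uniform_measure lborel (strip_int K i))) \<in> borel_measurable M"
      by (subst measurable_cong_sets[OF M]) simp_all
  qed
  finally show ?thesis .
qed

definition bounded_borel :: "(real \<times> real \<Rightarrow> real) \<Rightarrow> real \<Rightarrow> bool" where
  "bounded_borel f B \<longleftrightarrow> f \<in> borel_measurable borel \<and> (\<forall>p. \<bar>f p\<bar> \<le> B)"

text \<open>The adjoint of \<open>P_|\<close>; it vanishes off the strips, i.e.\ off \<open>Q\<close>.\<close>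

definition vert_avg_fun :: "nat \<Rightarrow> (real \<times> real \<Rightarrow> real) \<Rightarrow> real \<times> real \<Rightarrow> real" where
  "vert_avg_fun K f p =
     (\<Sum>i<K. indicator (strip K i) p * (\<integral> t. f (fst p, t) \<partial>uniform_measure lborel (strip_int K i)))"

lemma bounded_borelD:
  assumes "bounded_borel f B"
  shows "f \<in> borel_measurable borel" and "\<bar>f p\<bar> \<le> B"
  using assms unfolding bounded_borel_def by blast+

lemma bounded_borel_nonneg: "bounded_borel f B \<Longrightarrow> 0 \<le> B"
  unfolding bounded_borel_def by (meson abs_ge_zero order_trans)

lemma bounded_borel_integrable:
  assumes "finite_measure M" "sets M = sets borel" "bounded_borel f B"
  shows "integrable M f"
proof -
  interpret finite_measure M by fact
  show ?thesis using assms(2,3) unfolding bounded_borel_def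
    by (intro integrable_const_bound[where B=B] AE_I2) (auto simp: measurable_cong_sets[of M borel])
qed

lemma vert_avg_fun_on_strip:
  assumes i: "i < K" and p: "p \<in> strip K i"
  shows "vert_avg_fun K f p = (\<integral> t. f (fst p, t) \<partial>uniform_measure lborel (strip_int K i))"
proof -
  let ?a = "\<lambda>j. indicator (strip K j) p * (\<integral> t. f (fst p, t) \<partial>uniform_measure lborel (strip_int K j))"
  have "p \<notin> strip K j" if "j < K" "j \<noteq> i" for j
    using strip_disjoint[of i K j] i p that by auto
  then have "sum ?a ({..<K} - {i}) = 0" by (intro sum.neutral) auto
  moreover have "vert_avg_fun K f p = ?a i + sum ?a ({..<K} - {i})"
    unfolding vert_avg_fun_def using i by (subst sum.remove[of _ i]) auto
  ultimately show ?thesis using p by simp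
qed

lemma vert_avg_fun_strip_const:
  assumes i: "i < K" and x: "x \<in> {0..1}" and y: "y \<in> strip_int K i"
  shows "vert_avg_fun K f (x, y) = vert_avg_fun K f (x, real i / real K)"
  using vert_avg_fun_on_strip[OF i, of "(x, y)"] vert_avg_fun_on_strip[OF i, of "(x, real i / real K)"]
    strip_int_lower_mem[OF i] x y unfolding strip_def by simp

lemma vert_avg_fun_off_strips: "(\<And>i. i < K \<Longrightarrow> p \<notin> strip K i) \<Longrightarrow> vert_avg_fun K f p = 0"
  unfolding vert_avg_fun_def by (intro sum.neutral) auto

lemma borel_measurable_slice:
  fixes f :: "real \<times> real \<Rightarrow> real"
  assumes "f \<in> borel_measurable borel"
  shows "(\<lambda>t. f (x, t)) \<in> borel_measurable borel" and "(\<lambda>t. f (t, y)) \<in> borel_measurable borel"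
proof -
  have "f \<in> borel_measurable (borel \<Otimes>\<^sub>M (borel :: real measure))" using assms by (simp only: borel_prod)
  then show "(\<lambda>t. f (x, t)) \<in> borel_measurable borel" "(\<lambda>t. f (t, y)) \<in> borel_measurable borel"
    by (auto intro: measurable_Pair1 measurable_Pair2)
qed

lemma integrable_slice_uniform_strip:
  assumes i: "i < K" and f: "bounded_borel f B"
  shows "integrable (uniform_measure lborel (strip_int K i)) (\<lambda>t. f (x, t))"
proof -
  interpret U: prob_space "uniform_measure lborel (strip_int K i)" by (rule prob_space_uniform_strip[OF i])
  have "(\<lambda>t. f (x, t)) \<in> borel_measurable (uniform_measure lborel (strip_int K i))"
    using f borel_measurable_slice(1)[of f x] unfolding bounded_borel_def
    by (subst measurable_cong_sets[of _ borel]) simp_all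
  then show ?thesis
    using f unfolding bounded_borel_def by (intro U.integrable_const_bound[where B=B]) auto
qed

lemma integral_slice_uniform_strip_bound:
  assumes i: "i < K" and f: "bounded_borel f B"
  shows "\<bar>\<integral> t. f (x, t) \<partial>uniform_measure lborel (strip_int K i)\<bar> \<le> B"
proof -
  interpret U: prob_space "uniform_measure lborel (strip_int K i)" by (rule prob_space_uniform_strip[OF i])
  have "\<bar>\<integral> t. f (x, t) \<partial>uniform_measure lborel (strip_int K i)\<bar> \<le> (\<integral> t. B \<partial>uniform_measure lborel (strip_int K i))"
    using f integrable_slice_uniform_strip[OF i f] unfolding bounded_borel_def
    by (intro integral_abs_bound_integral) auto
  then show ?thesis by (simp add: measure_uniform_strip_UNIV[OF i])
qed

lemma borel_measurable_vert_avg_fun: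
  assumes f: "f \<in> borel_measurable borel"
  shows "vert_avg_fun K f \<in> borel_measurable borel"
  unfolding vert_avg_fun_def[abs_def]
proof (intro borel_measurable_sum borel_measurable_times)
  fix i assume "i \<in> {..<K}"
  then interpret U: prob_space "uniform_measure lborel (strip_int K i)"
    by (intro prob_space_uniform_strip) simp
  have "(\<lambda>x. \<integral> t. f (x, t) \<partial>uniform_measure lborel (strip_int K i)) \<in> borel_measurable borel"
    using measurable_pair_uniform_measure[OF f, of borel]
    by (intro U.borel_measurable_lebesgue_integral) simp_all
  from measurable_compose[OF measurable_fst_borel this]
  show "(\<lambda>p::real \<times> real. \<integral> t. f (fst p, t) \<partial>uniform_measure lborel (strip_int K i)) \<in> borel_measurable borel"
    by (simp add: o_def)
  show "(indicator (strip K i) :: _ \<Rightarrow> real) \<in> borel_measurable borel"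
    using strip_borel by (intro borel_measurable_indicator) simp
qed

lemma bounded_borel_vert_avg_fun:
  assumes f: "bounded_borel f B"
  shows "bounded_borel (vert_avg_fun K f) B"
  unfolding bounded_borel_def
proof (intro conjI allI)
  show "vert_avg_fun K f \<in> borel_measurable borel"
    using f borel_measurable_vert_avg_fun unfolding bounded_borel_def by blast
  fix p
  show "\<bar>vert_avg_fun K f p\<bar> \<le> B"
  proof (cases "\<exists>i<K. p \<in> strip K i")
    case True
    then obtain i where "i < K" "p \<in> strip K i" by blast
    then show ?thesis using vert_avg_fun_on_strip integral_slice_uniform_strip_bound[OF _ f] by simp
  next
    case False
    then show ?thesis using vert_avg_fun_off_strips[of K p f] bounded_borel_nonneg[OF f] by auto
  qed
qed

lemma vert_avg_fun_nonneg: "(\<And>p. 0 \<le> f p) \<Longrightarrow> 0 \<le> vert_avg_fun K f p"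
  unfolding vert_avg_fun_def by (intro sum_nonneg mult_nonneg_nonneg integral_nonneg_AE AE_I2) auto

lemma vert_avg_fun_add:
  assumes f: "bounded_borel f B" and g: "bounded_borel g C"
  shows "vert_avg_fun K (\<lambda>p. f p + g p) = (\<lambda>p. vert_avg_fun K f p + vert_avg_fun K g p)"
  unfolding vert_avg_fun_def sum.distrib[symmetric] distrib_left[symmetric]
  by (intro ext sum.cong refl arg_cong2[where f="(*)"] Bochner_Integration.integral_add
      integrable_slice_uniform_strip[OF _ f] integrable_slice_uniform_strip[OF _ g]) simp_all

lemma vert_avg_fun_idem:
  assumes f: "bounded_borel f B"
  shows "vert_avg_fun K (vert_avg_fun K f) = vert_avg_fun K f"
proof
  fix p :: "real \<times> real"
  show "vert_avg_fun K (vert_avg_fun K f) p = vert_avg_fun K f p"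
  proof (cases "\<exists>i<K. p \<in> strip K i")
    case True
    then obtain i where i: "i < K" "p \<in> strip K i" by blast
    define U where "U = uniform_measure lborel (strip_int K i)"
    interpret U: prob_space U unfolding U_def by (rule prob_space_uniform_strip[OF i(1)])
    have x: "fst p \<in> {0..1}" using i(2) unfolding strip_def by auto
    have "(\<integral> t. vert_avg_fun K f (fst p, t) \<partial>U) = (\<integral> t. vert_avg_fun K f p \<partial>U)"
    proof (rule integral_cong_AE)
      have "vert_avg_fun K f \<in> borel_measurable borel"
        using f by (simp add: borel_measurable_vert_avg_fun bounded_borel_def)
      from borel_measurable_slice(1)[OF this]
      show "(\<lambda>t. vert_avg_fun K f (fst p, t)) \<in> borel_measurable U"
        unfolding U_def by (subst measurable_cong_sets[of _ borel]) simp_all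
      show "AE t in U. vert_avg_fun K f (fst p, t) = vert_avg_fun K f p"
        using AE_uniform_strip[OF i(1)] unfolding U_def
        by eventually_elim (use vert_avg_fun_strip_const[OF i(1) x] i(2) in \<open>auto simp: strip_def\<close>)
    qed simp
    then show ?thesis
      using vert_avg_fun_on_strip[OF i] unfolding U_def by (simp add: measure_uniform_strip_UNIV[OF i(1)])
  next
    case False
    then show ?thesis using vert_avg_fun_off_strips[of K p] by auto
  qed
qed

section \<open>Duality\<close>

lemma nn_integral_vert_avg_eq:
  assumes M: "sets M = sets borel" and f: "bounded_borel f B" and nn: "\<And>p. 0 \<le> f p"
  shows "(\<integral>\<^sup>+ p. ennreal (f p) \<partial>vert_avg K M) = (\<integral>\<^sup>+ p. ennreal (vert_avg_fun K f p) \<partial>M)"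
proof -
  let ?U = "\<lambda>i. uniform_measure lborel (strip_int K i)"
  have fm: "(\<lambda>p. ennreal (f p)) \<in> borel_measurable borel"
    using bounded_borelD(1)[OF f] by simp
  have slice: "(\<integral>\<^sup>+ t. ennreal (f (x, t)) \<partial>?U i) = ennreal (\<integral> t. f (x, t) \<partial>?U i)"
    if "i < K" for i x
    by (rule nn_integral_eq_integral[OF integrable_slice_uniform_strip[OF that f]]) (simp add: nn)
  have "(\<integral>\<^sup>+ p. ennreal (f p) \<partial>vert_avg K M) =
      (\<integral>\<^sup>+ p. (\<Sum>i<K. indicator (strip K i) p * (\<integral>\<^sup>+ t. ennreal (f (fst p, t)) \<partial>?U i)) \<partial>M)"
    by (rule nn_integral_vert_avg[OF M fm])
  also have "\<dots> = (\<integral>\<^sup>+ p. (\<Sum>i<K. ennreal (indicator (strip K i) p * (\<integral> t. f (fst p, t) \<partial>?U i))) \<partial>M)"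
    using slice by (intro nn_integral_cong sum.cong refl) (simp add: ennreal_mult' ennreal_indicator)
  also have "\<dots> = (\<integral>\<^sup>+ p. ennreal (vert_avg_fun K f p) \<partial>M)"
    unfolding vert_avg_fun_def
    by (intro nn_integral_cong sum_ennreal mult_nonneg_nonneg integral_nonneg_AE AE_I2) (simp_all add: nn)
  finally show ?thesis .
qed

lemma finite_measure_vert_avg:
  assumes M: "finite_measure M" "sets M = sets borel"
  shows "finite_measure (vert_avg K M)"
proof (rule finite_measureI)
  have one: "bounded_borel (\<lambda>_. 1) 1" unfolding bounded_borel_def by simp
  have "emeasure (vert_avg K M) (space (vert_avg K M)) = (\<integral>\<^sup>+ p. ennreal 1 \<partial>vert_avg K M)"
    by simp
  also have "\<dots> = (\<integral>\<^sup>+ p. ennreal (vert_avg_fun K (\<lambda>_. 1) p) \<partial>M)"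
    by (rule nn_integral_vert_avg_eq[OF M(2) one]) simp
  also have "\<dots> \<le> (\<integral>\<^sup>+ p. ennreal 1 \<partial>M)"
    using bounded_borel_vert_avg_fun[OF one, of K] unfolding bounded_borel_def
    by (intro nn_integral_mono ennreal_leI) (auto simp: abs_le_iff)
  also have "\<dots> < \<infinity>"
    using finite_measure.emeasure_finite[OF M(1), of "space M"] by (simp add: top.not_eq_extremum)
  finally show "emeasure (vert_avg K M) (space (vert_avg K M)) \<noteq> \<infinity>" by simp
qed

lemma integral_vert_avg_nonneg:
  assumes M: "sets M = sets borel" and f: "bounded_borel f B" and nn: "\<And>p. 0 \<le> f p"
  shows "integral\<^sup>L (vert_avg K M) f = integral\<^sup>L M (vert_avg_fun K f)"
proof -
  have fm: "f \<in> borel_measurable (vert_avg K M)"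
    using bounded_borelD(1)[OF f] by (subst measurable_cong_sets[OF sets_vert_avg]) simp_all
  have am: "vert_avg_fun K f \<in> borel_measurable M"
    using bounded_borelD(1)[OF bounded_borel_vert_avg_fun[OF f]]
    by (subst measurable_cong_sets[OF M]) simp_all
  have "integral\<^sup>L (vert_avg K M) f = enn2real (\<integral>\<^sup>+ p. ennreal (f p) \<partial>vert_avg K M)"
    by (rule integral_eq_nn_integral) (simp_all add: fm nn)
  also have "\<dots> = enn2real (\<integral>\<^sup>+ p. ennreal (vert_avg_fun K f p) \<partial>M)"
    by (simp only: nn_integral_vert_avg_eq[OF M f nn])
  also have "\<dots> = integral\<^sup>L M (vert_avg_fun K f)"
    by (rule integral_eq_nn_integral[symmetric]) (simp_all add: am vert_avg_fun_nonneg nn)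
  finally show ?thesis .
qed

text \<open>Shifting \<open>f\<close> by its bound reduces the general case to the nonnegative one.\<close>

lemma integral_vert_avg:
  assumes M: "finite_measure M" "sets M = sets borel" and f: "bounded_borel f B"
  shows "integral\<^sup>L (vert_avg K M) f = integral\<^sup>L M (vert_avg_fun K f)"
proof -
  have nn: "0 \<le> f p + B" and "\<bar>f p + B\<bar> \<le> 2 * B" for p
    using bounded_borelD(2)[OF f, of p] by (auto simp: abs_le_iff)
  then have fB: "bounded_borel (\<lambda>p. f p + B) (2 * B)"
    using bounded_borelD(1)[OF f] unfolding bounded_borel_def by simp
  have B: "bounded_borel (\<lambda>_. B) B"
    using bounded_borel_nonneg[OF f] unfolding bounded_borel_def by simp
  have V: "finite_measure (vert_avg K M)" "sets (vert_avg K M) = sets borel"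
    by (rule finite_measure_vert_avg[OF M], rule sets_vert_avg)
  have "integral\<^sup>L (vert_avg K M) f = integral\<^sup>L (vert_avg K M) (\<lambda>p. f p + B) - integral\<^sup>L (vert_avg K M) (\<lambda>_. B)"
    using bounded_borel_integrable[OF V f] bounded_borel_integrable[OF V B] by simp
  also have "\<dots> = integral\<^sup>L M (vert_avg_fun K (\<lambda>p. f p + B)) - integral\<^sup>L M (vert_avg_fun K (\<lambda>_. B))"
    using integral_vert_avg_nonneg[OF M(2) fB nn] integral_vert_avg_nonneg[OF M(2) B] bounded_borel_nonneg[OF f]
    by simp
  also have "\<dots> = integral\<^sup>L M (vert_avg_fun K f)"
    using bounded_borel_integrable[OF M bounded_borel_vert_avg_fun[OF f, of K]]
      bounded_borel_integrable[OF M bounded_borel_vert_avg_fun[OF B, of K]]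
    by (simp add: vert_avg_fun_add[OF f B])
  finally show ?thesis .
qed

lemma lorenz_map_measurable:
  assumes "(\<lambda>p. (T (fst p), G p)) \<in> borel_measurable (restrict_space borel unit_sq)"
  shows "lorenz_map T G \<in> measurable borel borel"
proof -
  have "unit_sq \<in> sets borel"
    unfolding unit_sq_def by (intro borel_closed closed_Times) auto
  then have "(\<lambda>p. if p \<in> unit_sq then (T (fst p), G p) else p) \<in> measurable borel borel"
    using assms by (subst measurable_If_restrict_space_iff) (auto intro!: measurable_restrict_space1)
  then show ?thesis unfolding lorenz_map_def[abs_def] .
qed

definition avg_koopman ::
  "nat \<Rightarrow> (real \<Rightarrow> real) \<Rightarrow> (real \<times> real \<Rightarrow> real) \<Rightarrow> (real \<times> real \<Rightarrow> real) \<Rightarrow> real \<times> real \<Rightarrow> real" where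
  "avg_koopman K T G h = vert_avg_fun K (\<lambda>p. h (lorenz_map T G p))"

definition L_delta_adj ::
  "nat \<Rightarrow> (real \<Rightarrow> real) \<Rightarrow> (real \<times> real \<Rightarrow> real) \<Rightarrow> (real \<times> real \<Rightarrow> real) \<Rightarrow> real \<times> real \<Rightarrow> real" where
  "L_delta_adj K T G f = avg_koopman K T G (vert_avg_fun K f)"

context
  fixes T :: "real \<Rightarrow> real" and G :: "real \<times> real \<Rightarrow> real"
  assumes F_meas: "lorenz_map T G \<in> measurable borel borel"
begin

lemma bounded_borel_comp_lorenz_map: "bounded_borel f B \<Longrightarrow> bounded_borel (\<lambda>p. f (lorenz_map T G p)) B"
  using measurable_compose[OF F_meas] unfolding bounded_borel_def by blast

lemma bounded_borel_avg_koopman: "bounded_borel h B \<Longrightarrow> bounded_borel (avg_koopman K T G h) B"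
  unfolding avg_koopman_def by (intro bounded_borel_vert_avg_fun bounded_borel_comp_lorenz_map)

lemma vert_avg_fun_avg_koopman:
  "bounded_borel h B \<Longrightarrow> vert_avg_fun K (avg_koopman K T G h) = avg_koopman K T G h"
  unfolding avg_koopman_def by (intro vert_avg_fun_idem bounded_borel_comp_lorenz_map)

lemma bounded_borel_avg_koopman_iter: "bounded_borel h B \<Longrightarrow> bounded_borel ((avg_koopman K T G ^^ n) h) B"
  by (induction n) (simp_all add: bounded_borel_avg_koopman)

lemma bounded_borel_L_delta_adj: "bounded_borel f B \<Longrightarrow> bounded_borel (L_delta_adj K T G f) B"
  unfolding L_delta_adj_def by (intro bounded_borel_avg_koopman bounded_borel_vert_avg_fun)

lemma L_delta_adj_iter:
  assumes f: "bounded_borel f B"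
  shows "(L_delta_adj K T G ^^ Suc n) f = (avg_koopman K T G ^^ Suc n) (vert_avg_fun K f)"
proof (induction n)
  case 0
  then show ?case by (simp add: L_delta_adj_def)
next
  case (Suc n)
  have h: "bounded_borel ((avg_koopman K T G ^^ n) (vert_avg_fun K f)) B"
    by (intro bounded_borel_avg_koopman_iter bounded_borel_vert_avg_fun f)
  let ?h = "(avg_koopman K T G ^^ Suc n) (vert_avg_fun K f)"
  have "vert_avg_fun K ?h = ?h"
    using vert_avg_fun_avg_koopman[OF h] by simp
  have "(L_delta_adj K T G ^^ Suc (Suc n)) f = L_delta_adj K T G ((L_delta_adj K T G ^^ Suc n) f)"
    by simp
  also have "\<dots> = avg_koopman K T G (vert_avg_fun K ?h)"
    unfolding Suc L_delta_adj_def ..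
  finally show ?case using \<open>vert_avg_fun K ?h = ?h\<close> by simp
qed

lemma L_delta_finite_measure:
  assumes "finite_measure M" "sets M = sets borel"
  shows "finite_measure (L_delta K T G M)" and "sets (L_delta K T G M) = sets borel"
proof -
  have V: "finite_measure (vert_avg K M)" "sets (vert_avg K M) = sets borel"
    by (rule finite_measure_vert_avg[OF assms], rule sets_vert_avg)
  have "lorenz_map T G \<in> measurable (vert_avg K M) borel"
    using F_meas by (subst measurable_cong_sets[OF V(2) refl])
  then have "finite_measure (transfer T G (vert_avg K M))"
    unfolding transfer_def by (rule finite_measure.finite_measure_distr[OF V(1)])
  then show "finite_measure (L_delta K T G M)"
    unfolding L_delta_def by (rule finite_measure_vert_avg) (simp add: transfer_def)
  show "sets (L_delta K T G M) = sets borel" unfolding L_delta_def by (rule sets_vert_avg)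
qed

lemma integral_L_delta:
  assumes M: "finite_measure M" "sets M = sets borel" and f: "bounded_borel f B"
  shows "integral\<^sup>L (L_delta K T G M) f = integral\<^sup>L M (L_delta_adj K T G f)"
proof -
  let ?V = "vert_avg K M"
  have V: "finite_measure ?V" "sets ?V = sets borel"
    by (rule finite_measure_vert_avg[OF M], rule sets_vert_avg)
  have F_meas_V: "lorenz_map T G \<in> measurable ?V borel"
    using F_meas by (subst measurable_cong_sets[OF V(2) refl])
  have "finite_measure (transfer T G ?V)"
    unfolding transfer_def by (rule finite_measure.finite_measure_distr[OF V(1) F_meas_V])
  then have "integral\<^sup>L (L_delta K T G M) f = integral\<^sup>L (transfer T G ?V) (vert_avg_fun K f)"
    unfolding L_delta_def by (rule integral_vert_avg[OF _ _ f]) (simp add: transfer_def)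
  also have "\<dots> = integral\<^sup>L ?V (\<lambda>p. vert_avg_fun K f (lorenz_map T G p))"
    unfolding transfer_def
    by (rule integral_distr[OF F_meas_V bounded_borelD(1)[OF bounded_borel_vert_avg_fun[OF f]]])
  also have "\<dots> = integral\<^sup>L M (L_delta_adj K T G f)"
    unfolding L_delta_adj_def avg_koopman_def
    by (rule integral_vert_avg[OF M bounded_borel_comp_lorenz_map[OF bounded_borel_vert_avg_fun[OF f]]])
  finally show ?thesis .
qed

lemma L_delta_iter_finite_measure:
  assumes "finite_measure M" "sets M = sets borel"
  shows "finite_measure ((L_delta K T G ^^ n) M) \<and> sets ((L_delta K T G ^^ n) M) = sets borel"
  by (induction n) (simp_all add: assms L_delta_finite_measure)

lemma integral_L_delta_iter:
  assumes M: "finite_measure M" "sets M = sets borel" and f: "bounded_borel f B"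
  shows "integral\<^sup>L ((L_delta K T G ^^ n) M) f = integral\<^sup>L M ((L_delta_adj K T G ^^ n) f)"
  using f
proof (induction n arbitrary: f)
  case (Suc n)
  have "integral\<^sup>L ((L_delta K T G ^^ Suc n) M) f = integral\<^sup>L ((L_delta K T G ^^ n) M) (L_delta_adj K T G f)"
    using L_delta_iter_finite_measure[OF M, of n] Suc.prems by (simp add: integral_L_delta)
  also have "\<dots> = integral\<^sup>L M ((L_delta_adj K T G ^^ Suc n) f)"
    using Suc.IH[OF bounded_borel_L_delta_adj[OF Suc.prems]] by (simp add: funpow_swap1)
  finally show ?case .
qed simp

end

section \<open>Vertical regularity\<close>

definition vert_regular :: "(real \<times> real \<Rightarrow> real) \<Rightarrow> real \<Rightarrow> real \<Rightarrow> bool" where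
  "vert_regular f c d \<longleftrightarrow>
     (\<forall>x\<in>{0..1}. \<forall>y\<in>{0..1}. \<forall>y'\<in>{0..1}. \<bar>f (x, y) - f (x, y')\<bar> \<le> c * \<bar>y - y'\<bar> + d)"

lemma integral_le_integral_add:
  fixes h :: "'a \<Rightarrow> real"
  assumes "prob_space M" "prob_space N"
    and "AE t in M. t \<in> S" "AE t in N. t \<in> S'" "integrable M h" "integrable N h"
    and le: "\<And>t t'. t \<in> S \<Longrightarrow> t' \<in> S' \<Longrightarrow> h t \<le> h t' + C"
  shows "integral\<^sup>L M h \<le> integral\<^sup>L N h + C"
proof -
  interpret M: prob_space M by fact
  interpret N: prob_space N by fact
  have *: "h t - C \<le> integral\<^sup>L N h" if t: "t \<in> S" for t
  proof (rule N.integral_ge_const[OF assms(6)])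
    show "AE t' in N. h t - C \<le> h t'" using assms(4) by eventually_elim (use le[OF t] in force)
  qed
  show ?thesis
  proof (rule M.integral_le_const[OF assms(5)])
    show "AE t in M. h t \<le> integral\<^sup>L N h + C" using assms(3) by eventually_elim (use * in force)
  qed
qed

text \<open>Averaging over a strip moves the vertical coordinate by at most \<open>1 / K\<close>, so comparing the
  averages at \<open>y\<close> and \<open>y'\<close> costs at most \<open>2 c / K\<close> beyond \<open>c \<bar>y - y'\<bar> + d\<close>.\<close>

lemma vert_regular_vert_avg_fun:
  assumes f: "bounded_borel f B" and reg: "vert_regular f c d" and c: "0 \<le> c" and K: "K > 0"
  shows "vert_regular (vert_avg_fun K f) c (d + 2 * c / real K)"
  unfolding vert_regular_def
proof (intro ballI)
  fix x y y' :: real assume x: "x \<in> {0..1}" and y: "y \<in> {0..1}" and y': "y' \<in> {0..1}"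
  obtain i where i: "i < K" "y \<in> strip_int K i" using strip_int_cover[OF K y] by blast
  obtain j where j: "j < K" "y' \<in> strip_int K j" using strip_int_cover[OF K y'] by blast
  define C where "C = c * (\<bar>y - y'\<bar> + 2 / real K) + d"
  have osc: "\<bar>f (x, t) - f (x, t')\<bar> \<le> C" if t: "t \<in> strip_int K i" and t': "t' \<in> strip_int K j" for t t'
  proof -
    have "\<bar>t - t'\<bar> \<le> \<bar>y - y'\<bar> + 2 / real K"
      using strip_int_dist_le[OF i(1) t i(2)] strip_int_dist_le[OF j(1) t' j(2)] by linarith
    then have "c * \<bar>t - t'\<bar> \<le> c * (\<bar>y - y'\<bar> + 2 / real K)" using c by (rule mult_left_mono)
    moreover have "\<bar>f (x, t) - f (x, t')\<bar> \<le> c * \<bar>t - t'\<bar> + d"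
      using reg x strip_int_subset[OF i(1)] strip_int_subset[OF j(1)] t t' unfolding vert_regular_def by blast
    ultimately show ?thesis unfolding C_def by linarith
  qed
  let ?Ui = "uniform_measure lborel (strip_int K i)"
  let ?Uj = "uniform_measure lborel (strip_int K j)"
  have osc': "f (x, t) \<le> f (x, t') + C \<and> f (x, t') \<le> f (x, t) + C"
    if "t \<in> strip_int K i" "t' \<in> strip_int K j" for t t'
    using osc[OF that] by (simp add: abs_le_iff)
  have "integral\<^sup>L ?Ui (\<lambda>t. f (x, t)) \<le> integral\<^sup>L ?Uj (\<lambda>t. f (x, t)) + C"
    by (rule integral_le_integral_add[OF prob_space_uniform_strip[OF i(1)] prob_space_uniform_strip[OF j(1)]
        AE_uniform_strip[OF i(1)] AE_uniform_strip[OF j(1)]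
        integrable_slice_uniform_strip[OF i(1) f] integrable_slice_uniform_strip[OF j(1) f]])
      (use osc' in blast)
  moreover have "integral\<^sup>L ?Uj (\<lambda>t. f (x, t)) \<le> integral\<^sup>L ?Ui (\<lambda>t. f (x, t)) + C"
    by (rule integral_le_integral_add[OF prob_space_uniform_strip[OF j(1)] prob_space_uniform_strip[OF i(1)]
        AE_uniform_strip[OF j(1)] AE_uniform_strip[OF i(1)]
        integrable_slice_uniform_strip[OF j(1) f] integrable_slice_uniform_strip[OF i(1) f]])
      (use osc' in blast)
  moreover have "(x, y) \<in> strip K i" "(x, y') \<in> strip K j" using x i j unfolding strip_def by simp_all
  ultimately show "\<bar>vert_avg_fun K f (x, y) - vert_avg_fun K f (x, y')\<bar> \<le> c * \<bar>y - y'\<bar> + (d + 2 * c / real K)"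
    using vert_avg_fun_on_strip[OF i(1)] vert_avg_fun_on_strip[OF j(1)] unfolding C_def
    by (simp add: algebra_simps abs_le_iff)
qed

lemma lorenz_like_props:
  assumes "lorenz_like T G lam"
  shows "\<forall>x\<in>{0..1}. T x \<in> {0..1}"
    and "\<forall>x\<in>{0..1}. \<forall>y1\<in>{0..1}. \<forall>y2\<in>{0..1}. \<bar>G (x, y1) - G (x, y2)\<bar> \<le> lam * \<bar>y1 - y2\<bar>"
    and "\<forall>p\<in>unit_sq. 0 < G p \<and> G p < 1"
  using assms unfolding lorenz_like_def Let_def by (elim exE conjE; blast)+

lemma lorenz_like_nonneg:
  assumes "lorenz_like T G lam"
  shows "0 \<le> lam"
proof -
  have "(0::real) \<in> {0..1}" "(1::real) \<in> {0..1}" by auto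
  then have "\<bar>G (0, 0) - G (0, 1)\<bar> \<le> lam * \<bar>0 - 1\<bar>"
    using lorenz_like_props(2)[OF assms] by blast
  then show ?thesis by simp
qed

lemma vert_regular_comp_lorenz_map:
  assumes F: "lorenz_like T G lam" and reg: "vert_regular f c d" and c: "0 \<le> c"
  shows "vert_regular (\<lambda>p. f (lorenz_map T G p)) (lam * c) d"
  unfolding vert_regular_def
proof (intro ballI)
  fix x y y' :: real assume x: "x \<in> {0..1}" and y: "y \<in> {0..1}" and y': "y' \<in> {0..1}"
  have Q: "(x, y) \<in> unit_sq" "(x, y') \<in> unit_sq" using x y y' unfolding unit_sq_def by auto
  have "T x \<in> {0..1}" "G (x, y) \<in> {0..1}" "G (x, y') \<in> {0..1}"
    using lorenz_like_props(1,3)[OF F] x Q by (auto simp: less_imp_le)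
  then have "\<bar>f (T x, G (x, y)) - f (T x, G (x, y'))\<bar> \<le> c * \<bar>G (x, y) - G (x, y')\<bar> + d"
    using reg unfolding vert_regular_def by blast
  also have "\<dots> \<le> c * (lam * \<bar>y - y'\<bar>) + d"
    using lorenz_like_props(2)[OF F] x y y' c by (simp add: mult_left_mono)
  finally show "\<bar>f (lorenz_map T G (x, y)) - f (lorenz_map T G (x, y'))\<bar> \<le> lam * c * \<bar>y - y'\<bar> + d"
    using Q unfolding lorenz_map_def by (simp add: algebra_simps)
qed

lemma vert_regular_avg_koopman_iter:
  assumes F: "lorenz_like T G lam" and F_meas: "lorenz_map T G \<in> measurable borel borel"
    and K: "K > 0" and f: "bounded_borel f 1" and reg: "vert_regular f 1 0"
  shows "vert_regular ((avg_koopman K T G ^^ n) (vert_avg_fun K f)) (lam ^ n) (2 / real K * (\<Sum>k\<le>n. lam ^ k))"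
proof (induction n)
  case 0
  show ?case using vert_regular_vert_avg_fun[OF f reg _ K] by simp
next
  case (Suc n)
  let ?h = "(avg_koopman K T G ^^ n) (vert_avg_fun K f)"
  have lam: "0 \<le> lam" by (rule lorenz_like_nonneg[OF F])
  have "bounded_borel (\<lambda>p. ?h (lorenz_map T G p)) 1"
    by (intro bounded_borel_comp_lorenz_map[OF F_meas] bounded_borel_avg_koopman_iter[OF F_meas]
        bounded_borel_vert_avg_fun f)
  moreover have "vert_regular (\<lambda>p. ?h (lorenz_map T G p)) (lam * lam ^ n) (2 / real K * (\<Sum>k\<le>n. lam ^ k))"
    using lam by (intro vert_regular_comp_lorenz_map[OF F Suc.IH]) simp
  ultimately have "vert_regular (avg_koopman K T G ?h) (lam ^ Suc n)
      (2 / real K * (\<Sum>k\<le>n. lam ^ k) + 2 * lam ^ Suc n / real K)"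
    unfolding avg_koopman_def using lam K by (intro vert_regular_vert_avg_fun) simp_all
  then show ?case by (simp add: algebra_simps)
qed

section \<open>Comparison with functions of \<open>x\<close> alone\<close>

lemma approx_by_fun_of_fst:
  assumes K: "K > 0" and h: "bounded_borel h 1" and avg: "vert_avg_fun K h = h"
    and reg: "vert_regular h c d" and c: "0 \<le> c"
  obtains m where "m \<in> borel_measurable borel" and "\<And>x. \<bar>m x\<bar> \<le> 1"
    and "\<And>p. p \<in> unit_sq \<Longrightarrow> \<bar>h p - m (fst p)\<bar> \<le> (c + d) / 2"
proof -
  define a where "a j x = h (x, real j / real K)" for j x
  define m where "m x = (Max ((\<lambda>j. a j x) ` {..<K}) + Min ((\<lambda>j. a j x) ` {..<K})) / 2" for x
  have fin: "finite {..<K}" and ne: "{..<K} \<noteq> {}" using K by auto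
  have a_bound: "\<bar>a j x\<bar> \<le> 1" for j x unfolding a_def by (rule bounded_borelD(2)[OF h])
  have max: "\<exists>j<K. Max ((\<lambda>j. a j x) ` {..<K}) = a j x" for x
  proof -
    have "Max ((\<lambda>j. a j x) ` {..<K}) \<in> (\<lambda>j. a j x) ` {..<K}" using fin ne by (intro Max_in) auto
    then show ?thesis by auto
  qed
  have min: "\<exists>j<K. Min ((\<lambda>j. a j x) ` {..<K}) = a j x" for x
  proof -
    have "Min ((\<lambda>j. a j x) ` {..<K}) \<in> (\<lambda>j. a j x) ` {..<K}" using fin ne by (intro Min_in) auto
    then show ?thesis by auto
  qed
  have "m \<in> borel_measurable borel" unfolding m_def[abs_def] a_def
    using borel_measurable_slice(2)[OF bounded_borelD(1)[OF h]]
    by (intro borel_measurable_divide borel_measurable_add borel_measurable_Max borel_measurable_Min fin) auto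
  moreover have "\<bar>m x\<bar> \<le> 1" for x
  proof -
    obtain j k where "Max ((\<lambda>j. a j x) ` {..<K}) = a j x" "Min ((\<lambda>j. a j x) ` {..<K}) = a k x"
      using max min by blast
    then show ?thesis using a_bound[of j x] a_bound[of k x] unfolding m_def by (simp add: abs_le_iff)
  qed
  moreover have "\<bar>h p - m (fst p)\<bar> \<le> (c + d) / 2" if p: "p \<in> unit_sq" for p
  proof -
    obtain x y where xy: "p = (x, y)" "x \<in> {0..1}" "y \<in> {0..1}" using p unfolding unit_sq_def by auto
    obtain i where i: "i < K" "y \<in> strip_int K i" using strip_int_cover[OF K xy(3)] .
    obtain j where j: "j < K" "Max ((\<lambda>j. a j x) ` {..<K}) = a j x" using max by blast
    obtain k where k: "k < K" "Min ((\<lambda>j. a j x) ` {..<K}) = a k x" using min by blast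
    have "h p = a i x"
      using vert_avg_fun_strip_const[OF i(1) xy(2) i(2), of h] unfolding avg xy(1) a_def .
    moreover have "a k x \<le> a i x" "a i x \<le> a j x"
      using i(1) j(2) k(2) fin by (auto intro!: Min_le Max_ge simp flip: j(2) k(2))
    moreover have "a j x - a k x \<le> c + d"
    proof -
      have jk: "0 \<le> real j / real K" "real j / real K \<le> 1" "0 \<le> real k / real K" "real k / real K \<le> 1"
        using strip_int_subset[OF j(1)] strip_int_lower_mem[OF j(1)]
          strip_int_subset[OF k(1)] strip_int_lower_mem[OF k(1)] by auto
      have "\<bar>real j / real K - real k / real K\<bar> \<le> 1" unfolding abs_le_iff using jk by (intro conjI; linarith)
      then have "c * \<bar>real j / real K - real k / real K\<bar> \<le> c * 1" using c by (rule mult_left_mono)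
      moreover have "\<bar>a j x - a k x\<bar> \<le> c * \<bar>real j / real K - real k / real K\<bar> + d"
        using reg xy(2) jk unfolding vert_regular_def a_def by auto
      ultimately show ?thesis by linarith
    qed
    ultimately show ?thesis using xy(1) j(2) k(2) unfolding m_def by (simp add: abs_le_iff field_simps)
  qed
  ultimately show thesis using that by blast
qed

lemma V_dist_ge:
  assumes M: "prob_space M" "sets M = sets borel" and N: "prob_space N" "sets N = sets borel"
    and m: "m \<in> borel_measurable borel" and m_bound: "\<And>x. \<bar>m x\<bar> \<le> 1"
  shows "\<bar>(\<integral>x. m x \<partial>M) - (\<integral>x. m x \<partial>N)\<bar> \<le> V_dist M N"
proof -
  let ?S = "{g :: real \<Rightarrow> real. g \<in> borel_measurable borel \<and> (\<forall>x. \<bar>g x\<bar> \<le> 1)}"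
  have bound: "\<bar>\<integral>x. g x \<partial>L\<bar> \<le> 1" if L: "prob_space L" "sets L = sets borel" and g: "g \<in> ?S" for L g
  proof -
    interpret L: prob_space L by (rule L(1))
    have "integrable L g"
      using g by (intro L.integrable_const_bound[where B=1]) (auto simp: measurable_cong_sets[OF L(2)])
    then have "\<bar>\<integral>x. g x \<partial>L\<bar> \<le> (\<integral>x. 1 \<partial>L)"
      using g by (intro integral_abs_bound_integral) auto
    then show ?thesis by (simp add: L.prob_space)
  qed
  have "bdd_above ((\<lambda>g. \<bar>(\<integral>x. g x \<partial>M) - (\<integral>x. g x \<partial>N)\<bar>) ` ?S)"
    using bound[OF M] bound[OF N] by (intro bdd_aboveI2[where M=2]) (smt (verit))
  then show ?thesis
    unfolding V_dist_def using m m_bound by (intro cSUP_upper) auto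
qed

lemma prob_on_Q_finite_measure:
  assumes "prob_on_Q M"
  shows "finite_measure M" and "sets M = sets borel"
proof -
  interpret prob_space M using assms unfolding prob_on_Q_def by simp
  show "finite_measure M" by (rule finite_measureI) simp
  show "sets M = sets borel" using assms unfolding prob_on_Q_def by simp
qed

lemma
  assumes "prob_on_Q M"
  shows measurable_fst_prob_on_Q: "fst \<in> measurable M lborel"
    and prob_space_x_marginal: "prob_space (x_marginal M)"
proof -
  interpret prob_space M using assms unfolding prob_on_Q_def by simp
  show m: "fst \<in> measurable M lborel"
    using measurable_fst_borel assms unfolding prob_on_Q_def by (subst measurable_cong_sets[of _ borel lborel borel]) simp_all
  show "prob_space (x_marginal M)" unfolding x_marginal_def by (rule prob_space_distr[OF m])
qed

lemma integral_close_to_x_marginal: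
  assumes M: "prob_on_Q M" and h: "bounded_borel h 1"
    and m: "m \<in> borel_measurable borel" and m_bound: "\<And>x. \<bar>m x\<bar> \<le> 1"
    and close: "\<And>p. p \<in> unit_sq \<Longrightarrow> \<bar>h p - m (fst p)\<bar> \<le> e"
  shows "\<bar>(\<integral>p. h p \<partial>M) - (\<integral>x. m x \<partial>x_marginal M)\<bar> \<le> e"
proof -
  interpret prob_space M using M unfolding prob_on_Q_def by simp
  note fin = prob_on_Q_finite_measure[OF M]
  have "m \<in> borel_measurable lborel" using m by simp
  from measurable_compose[OF measurable_fst_prob_on_Q[OF M] this]
  have mfst: "(\<lambda>p. m (fst p)) \<in> borel_measurable M" .
  have ih: "integrable M h" by (rule bounded_borel_integrable[OF fin h])
  have im: "integrable M (\<lambda>p. m (fst p))" using m_bound mfst by (intro integrable_const_bound[where B=1]) auto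
  have "(\<integral>x. m x \<partial>x_marginal M) = (\<integral>p. m (fst p) \<partial>M)"
    unfolding x_marginal_def by (rule integral_distr[OF measurable_fst_prob_on_Q[OF M]]) (use m in simp)
  moreover have "prob unit_sq = 1" using M unfolding prob_on_Q_def measure_def by simp
  then have "AE p in M. p \<in> unit_sq" by (rule AE_prob_1)
  then have ae: "AE p in M. \<bar>h p - m (fst p)\<bar> \<le> e" by eventually_elim (rule close)
  have d: "integrable M (\<lambda>p. h p - m (fst p))" using ih im by simp
  have "(\<integral>p. h p - m (fst p) \<partial>M) \<le> e"
    by (intro integral_le_const[OF d]) (use ae in \<open>rule eventually_mono, simp add: abs_le_iff\<close>)
  moreover have "- e \<le> (\<integral>p. h p - m (fst p) \<partial>M)"
    by (intro integral_ge_const[OF d]) (use ae in \<open>rule eventually_mono, simp add: abs_le_iff\<close>)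
  ultimately show ?thesis using ih im by (simp add: abs_le_iff)
qed

lemma integral_diff_le_V_dist:
  assumes K: "K > 0" and M: "prob_on_Q M" and N: "prob_on_Q N"
    and h: "bounded_borel h 1" and avg: "vert_avg_fun K h = h" and reg: "vert_regular h c d" and c: "0 \<le> c"
  shows "\<bar>(\<integral>p. h p \<partial>M) - (\<integral>p. h p \<partial>N)\<bar> \<le> c + d + V_dist (x_marginal M) (x_marginal N)"
proof -
  obtain m where m: "m \<in> borel_measurable borel" "\<And>x. \<bar>m x\<bar> \<le> 1"
    and close: "\<And>p. p \<in> unit_sq \<Longrightarrow> \<bar>h p - m (fst p)\<bar> \<le> (c + d) / 2"
    using approx_by_fun_of_fst[OF K h avg reg c] by blast
  have V: "\<bar>(\<integral>x. m x \<partial>x_marginal M) - (\<integral>x. m x \<partial>x_marginal N)\<bar> \<le> V_dist (x_marginal M) (x_marginal N)"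
    using prob_space_x_marginal[OF M] prob_space_x_marginal[OF N] m
    by (intro V_dist_ge) (simp_all add: x_marginal_def)
  have A: "\<bar>(\<integral>p. h p \<partial>M) - (\<integral>x. m x \<partial>x_marginal M)\<bar> \<le> (c + d) / 2"
    by (rule integral_close_to_x_marginal[OF M h m]) (rule close)
  have B: "\<bar>(\<integral>p. h p \<partial>N) - (\<integral>x. m x \<partial>x_marginal N)\<bar> \<le> (c + d) / 2"
    by (rule integral_close_to_x_marginal[OF N h m]) (rule close)
  have "(c + d) / 2 + (c + d) / 2 = c + d" by simp
  then show ?thesis
    using abs_le_D1[OF V] abs_le_D2[OF V] abs_le_D1[OF A] abs_le_D2[OF A] abs_le_D1[OF B] abs_le_D2[OF B]
    by (intro abs_leI) linarith+
qed

lemma W_dist_le: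
  assumes "\<And>g. \<forall>p\<in>unit_sq. \<forall>q\<in>unit_sq. \<bar>g p - g q\<bar> \<le> dist_sup p q \<Longrightarrow> \<forall>p\<in>unit_sq. \<bar>g p\<bar> \<le> 1 \<Longrightarrow>
      \<bar>(\<integral>p. indicator unit_sq p * g p \<partial>M) - (\<integral>p. indicator unit_sq p * g p \<partial>N)\<bar> \<le> B"
  shows "W_dist M N \<le> B"
  unfolding W_dist_def using assms by (intro cSUP_least) (auto intro!: exI[of _ "\<lambda>_. 0"] simp: dist_sup_def)

lemma W_test_fun_bounded_regular:
  assumes lip: "\<forall>p\<in>unit_sq. \<forall>q\<in>unit_sq. \<bar>g p - g q\<bar> \<le> dist_sup p q" and bound: "\<forall>p\<in>unit_sq. \<bar>g p\<bar> \<le> 1"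
  shows "bounded_borel (\<lambda>p. indicator unit_sq p * g p) 1" and "vert_regular (\<lambda>p. indicator unit_sq p * g p) 1 0"
proof -
  have ds: "dist_sup p q \<le> dist p q" for p q :: "real \<times> real"
    using dist_fst_le[of p q] dist_snd_le[of p q] unfolding dist_sup_def dist_real_def by simp
  have "1-lipschitz_on unit_sq g"
    unfolding lipschitz_on_def
  proof (intro conjI ballI)
    fix p q assume "p \<in> unit_sq" "q \<in> unit_sq"
    then show "dist (g p) (g q) \<le> 1 * dist p q"
      using lip ds[of p q] by (fastforce simp: dist_real_def)
  qed simp
  then have "continuous_on unit_sq g" by (rule lipschitz_on_continuous_on)
  moreover have "unit_sq \<in> sets borel" unfolding unit_sq_def by (intro borel_closed closed_Times) auto
  ultimately have "(\<lambda>p. indicator unit_sq p *\<^sub>R g p) \<in> borel_measurable borel"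
    by (rule borel_measurable_continuous_on_indicator[rotated])
  then show "bounded_borel (\<lambda>p. indicator unit_sq p * g p) 1"
    using bound unfolding bounded_borel_def by (auto simp: indicator_def)
  show "vert_regular (\<lambda>p. indicator unit_sq p * g p) 1 0"
    unfolding vert_regular_def
  proof (intro ballI)
    fix x y y' :: real assume "x \<in> {0..1}" "y \<in> {0..1}" "y' \<in> {0..1}"
    then have Q: "(x, y) \<in> unit_sq" "(x, y') \<in> unit_sq" unfolding unit_sq_def by auto
    have "\<bar>g (x, y) - g (x, y')\<bar> \<le> dist_sup (x, y) (x, y')" using lip Q by blast
    then show "\<bar>indicator unit_sq (x, y) * g (x, y) - indicator unit_sq (x, y') * g (x, y')\<bar> \<le> 1 * \<bar>y - y'\<bar> + 0"
      using Q unfolding dist_sup_def by simp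
  qed
qed

lemma integral_diff_L_delta_iter_le:
  assumes F: "lorenz_like T G lam" and F_meas: "lorenz_map T G \<in> measurable borel borel" and K: "K > 0"
    and M: "prob_on_Q M" and N: "prob_on_Q N" and f: "bounded_borel f 1" and reg: "vert_regular f 1 0"
  shows "\<bar>(\<integral>p. f p \<partial>(L_delta K T G ^^ Suc n) M) - (\<integral>p. f p \<partial>(L_delta K T G ^^ Suc n) N)\<bar>
    \<le> lam ^ Suc n + 2 / real K * (\<Sum>k\<le>Suc n. lam ^ k) + V_dist (x_marginal M) (x_marginal N)"
proof -
  define h where "h = (avg_koopman K T G ^^ Suc n) (vert_avg_fun K f)"
  have dual: "(\<integral>p. f p \<partial>(L_delta K T G ^^ Suc n) L) = (\<integral>p. h p \<partial>L)" if "prob_on_Q L" for L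
  proof -
    have "(\<integral>p. f p \<partial>(L_delta K T G ^^ Suc n) L) = (\<integral>p. (L_delta_adj K T G ^^ Suc n) f p \<partial>L)"
      using prob_on_Q_finite_measure[OF that] by (rule integral_L_delta_iter[OF F_meas _ _ f])
    then show ?thesis unfolding L_delta_adj_iter[OF F_meas f] h_def .
  qed
  have h_bound: "bounded_borel h 1"
    unfolding h_def by (intro bounded_borel_avg_koopman_iter[OF F_meas] bounded_borel_vert_avg_fun f)
  have "vert_avg_fun K h = h"
    unfolding h_def funpow.simps o_apply
    by (intro vert_avg_fun_avg_koopman[OF F_meas, where B=1] bounded_borel_avg_koopman_iter[OF F_meas]
        bounded_borel_vert_avg_fun f)
  moreover have "vert_regular h (lam ^ Suc n) (2 / real K * (\<Sum>k\<le>Suc n. lam ^ k))"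
    unfolding h_def by (rule vert_regular_avg_koopman_iter[OF F F_meas K f reg])
  ultimately show ?thesis
    unfolding dual[OF M] dual[OF N]
    by (intro integral_diff_le_V_dist[OF K M N h_bound]) (simp_all add: lorenz_like_nonneg[OF F])
qed

lemma geometric_sum_le:
  fixes lam :: real
  assumes "0 \<le> lam" "lam < 1"
  shows "(\<Sum>k\<le>n. lam ^ k) \<le> 1 / (1 - lam)"
proof -
  have "(\<Sum>k\<le>n. lam ^ k) = (1 - lam ^ Suc n) / (1 - lam)"
    using sum_gp_strict[of lam "Suc n"] assms by (simp add: lessThan_Suc_atMost)
  also have "\<dots> \<le> 1 / (1 - lam)" using assms by (intro divide_right_mono) auto
  finally show ?thesis .
qed

theorem mainTheorem3:
  fixes T :: "real \<Rightarrow> real" and G :: "real \<times> real \<Rightarrow> real" and lam :: real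
    and K :: nat and \<mu> \<nu> :: "(real \<times> real) measure" and n :: nat
  assumes F: "lorenz_like T G lam" and lam: "lam < 1"
    and Fmeas: "(\<lambda>p. (T (fst p), G p)) \<in> borel_measurable (restrict_space borel unit_sq)"
    and K: "K > 0"
    and mu: "prob_on_Q \<mu>" and nu: "prob_on_Q \<nu>"
    and ac_mu: "absolutely_continuous lborel (x_marginal \<mu>)"
    and ac_nu: "absolutely_continuous lborel (x_marginal \<nu>)"
    and n: "n \<ge> 1"
  shows "W_dist ((L_delta K T G ^^ n) \<mu>) ((L_delta K T G ^^ n) \<nu>)
           \<le> lam ^ n + 2 * (1 / real K) / (1 - lam) + V_dist (x_marginal \<mu>) (x_marginal \<nu>)"
proof -
  obtain m where n_eq: "n = Suc m" using n by (cases n) auto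
  have "2 / real K * (\<Sum>k\<le>n. lam ^ k) \<le> 2 / real K * (1 / (1 - lam))"
    using geometric_sum_le[OF lorenz_like_nonneg[OF F] lam] by (intro mult_left_mono) simp_all
  then have geom: "2 / real K * (\<Sum>k\<le>n. lam ^ k) \<le> 2 * (1 / real K) / (1 - lam)" by simp
  show ?thesis
  proof (rule W_dist_le)
    fix g assume "\<forall>p\<in>unit_sq. \<forall>q\<in>unit_sq. \<bar>g p - g q\<bar> \<le> dist_sup p q" "\<forall>p\<in>unit_sq. \<bar>g p\<bar> \<le> 1"
    from integral_diff_L_delta_iter_le[OF F lorenz_map_measurable[OF Fmeas] K mu nu W_test_fun_bounded_regular[OF this],
        where n = m]
    show "\<bar>(\<integral>p. indicator unit_sq p * g p \<partial>(L_delta K T G ^^ n) \<mu>) -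
        (\<integral>p. indicator unit_sq p * g p \<partial>(L_delta K T G ^^ n) \<nu>)\<bar>
      \<le> lam ^ n + 2 * (1 / real K) / (1 - lam) + V_dist (x_marginal \<mu>) (x_marginal \<nu>)"
      using geom unfolding n_eq by linarith
  qed
qed

end
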